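(* Let $L$ be a multisorted algebra in the quantifier-free signature. Then $L$ satisfies axioms (0)–(6) if and only if $L$ is isomorphic to a subalgebra of the quantifier-free algebra $A(W)$ of some set $W$.
   Context: Throughout, the Boolean prime ideal theorem is assumed. Signature. There is a sort $n$ for each natural number $n\ge 0$. For every function $\alpha\colon\{1,\dots,n\}\to\{1,\dots,k\}$ there is a unary function symbol ("substitution") $\alpha\colon n\to k$ (argument of sort $n$, value of sort $k$). For each sort there are constants $0,1$, binary operations $\vee,\wedge$ and a unary operation $\neg$. This is the quantifier-free signature. For substitutions $\alpha\colon k\to n$, $\beta\colon n\to m$, $\beta\circ\alpha\colon k\to m$ is the substitution symbol of the composite function, while $\beta(\alpha(r))$ is composition inside an algebra; $\mathrm{id}\colon n\to n$ is the identity substitution. Concrete algebras. For a set $W$ and substitution $\alpha\colon\{1,\dots,n\}\to\{1,\dots,k\}$: $\alpha^{\mathrm{tuple}}(x_1,\dots,x_k)=(x_{\alpha(1)},\dots,x_{\alpha(n)})$ and $\alpha^{\mathrm{relation}}(r)=\{\bar x\in W^k:\alpha^{\mathrm{tuple}}(\bar x)\in r\}$ for $r\subseteq W^n$. The quantifier-free algebra $A(W)$ interprets sort $n$ as $\mathcal P(W^n)$, $\alpha$ as $\alpha^{\mathrm{relation}}$, and $0,1,\vee,\wedge,\neg$ as $\emptyset,W^n,\cup,\cap$, complement in $W^n$. Partitioning cylindrifications: given $k_1,\dots,k_m$ and $n=\sum k_j$, the substitutions $c_i\colon k_i\to n$, $c_i(l)=l+\sum_{j<i}k_j$. In an algebra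 $x\le y$ (also $y\ge x$) means $x=x\wedge y$. Axioms: (0) For all partitioning cylindrifications $c_1,\dots,c_m$ and all $r_i,s_i$ of sort $k_i$: if $\bigvee_i c_i(s_i)\ge\bigwedge_i c_i(r_i)$ then $s_i\ge r_i$ for some $i$ (including $m=0$: $0\ge1$ fails in sort $0$). (1) Each sort is a bounded distributive lattice under $0,1,\vee,\wedge$. (2) Every substitution preserves $0,1,\vee,\wedge$. (3) $(\beta\circ\alpha)(r)=\beta(\alpha(r))$. (4) $\mathrm{id}(r)=r$. (5) $\alpha(\neg r)=\neg\alpha(r)$ for every substitution $\alpha$. (6) $r\vee\neg r=1$ and $r\wedge\neg r=0$ in every sort. *)

theory Defs
  imports Main
begin

text \<open>Sorts are natural
numbers; all sorts live in one HOL type 'a with carrier car n for sort n.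
The substitution symbol alpha : n -> k (alpha a function {1..n} -> {1..k})
is interpreted by sb n k alpha.  Substitutions are represented extensionally:
functions nat => nat with values in {1..k} on {1..n} and value 0 elsewhere.\<close>

record 'a qf_alg =
  car :: "nat \<Rightarrow> 'a set"
  sb  :: "nat \<Rightarrow> nat \<Rightarrow> (nat \<Rightarrow> nat) \<Rightarrow> 'a \<Rightarrow> 'a"
  zer :: "nat \<Rightarrow> 'a"
  one :: "nat \<Rightarrow> 'a"
  jn  :: "nat \<Rightarrow> 'a \<Rightarrow> 'a \<Rightarrow> 'a"
  mt  :: "nat \<Rightarrow> 'a \<Rightarrow> 'a \<Rightarrow> 'a"
  ng  :: "nat \<Rightarrow> 'a \<Rightarrow> 'a"

definition is_subst :: "nat \<Rightarrow> nat \<Rightarrow> (nat \<Rightarrow> nat) \<Rightarrow> bool" where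
  "is_subst n k \<alpha> \<longleftrightarrow> (\<forall>i\<in>{1..n}. \<alpha> i \<in> {1..k}) \<and> (\<forall>i. i \<notin> {1..n} \<longrightarrow> \<alpha> i = 0)"

definition id_subst :: "nat \<Rightarrow> nat \<Rightarrow> nat" where
  "id_subst n = (\<lambda>i. if i \<in> {1..n} then i else 0)"

text \<open>Partitioning cylindrification c_i : k_i -> sum k_j (0-based index i),
  c_i(l) = l + sum_{j<i} k_j.\<close>
definition cyl :: "nat list \<Rightarrow> nat \<Rightarrow> nat \<Rightarrow> nat" where
  "cyl ks i = (\<lambda>l. if l \<in> {1..ks ! i} then l + sum_list (take i ks) else 0)"

definition qf_multisorted_algebra :: "('a, 'b) qf_alg_scheme \<Rightarrow> bool" where
  "qf_multisorted_algebra L \<longleftrightarrow>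
     (\<forall>n. zer L n \<in> car L n \<and> one L n \<in> car L n) \<and>
     (\<forall>n. \<forall>x\<in>car L n. \<forall>y\<in>car L n.
         jn L n x y \<in> car L n \<and> mt L n x y \<in> car L n) \<and>
     (\<forall>n. \<forall>x\<in>car L n. ng L n x \<in> car L n) \<and>
     (\<forall>n k \<alpha>. is_subst n k \<alpha> \<longrightarrow> (\<forall>x\<in>car L n. sb L n k \<alpha> x \<in> car L k))"

definition le_in :: "('a, 'b) qf_alg_scheme \<Rightarrow> nat \<Rightarrow> 'a \<Rightarrow> 'a \<Rightarrow> bool" where
  "le_in L n x y \<longleftrightarrow> x = mt L n x y"

definition big_jn :: "('a, 'b) qf_alg_scheme \<Rightarrow> nat \<Rightarrow> 'a list \<Rightarrow> 'a" where
  "big_jn L n xs = foldr (jn L n) xs (zer L n)"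

definition big_mt :: "('a, 'b) qf_alg_scheme \<Rightarrow> nat \<Rightarrow> 'a list \<Rightarrow> 'a" where
  "big_mt L n xs = foldr (mt L n) xs (one L n)"

definition ax0 :: "('a, 'b) qf_alg_scheme \<Rightarrow> bool" where
  "ax0 L \<longleftrightarrow> (\<forall>ks rs ss. length rs = length ks \<longrightarrow> length ss = length ks \<longrightarrow>
      (\<forall>i<length ks. rs ! i \<in> car L (ks ! i) \<and> ss ! i \<in> car L (ks ! i)) \<longrightarrow>
      le_in L (sum_list ks)
        (big_mt L (sum_list ks) (map (\<lambda>i. sb L (ks ! i) (sum_list ks) (cyl ks i) (rs ! i)) [0..<length ks]))
        (big_jn L (sum_list ks) (map (\<lambda>i. sb L (ks ! i) (sum_list ks) (cyl ks i) (ss ! i)) [0..<length ks]))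
      \<longrightarrow> (\<exists>i<length ks. le_in L (ks ! i) (rs ! i) (ss ! i)))"

definition ax1 :: "('a, 'b) qf_alg_scheme \<Rightarrow> bool" where
  "ax1 L \<longleftrightarrow> (\<forall>n. \<forall>x\<in>car L n. \<forall>y\<in>car L n. \<forall>z\<in>car L n.
      jn L n (jn L n x y) z = jn L n x (jn L n y z) \<and>
      mt L n (mt L n x y) z = mt L n x (mt L n y z) \<and>
      jn L n x y = jn L n y x \<and> mt L n x y = mt L n y x \<and>
      jn L n x (mt L n x y) = x \<and> mt L n x (jn L n x y) = x \<and>
      jn L n x (zer L n) = x \<and> mt L n x (one L n) = x \<and>
      mt L n x (jn L n y z) = jn L n (mt L n x y) (mt L n x z))"

definition ax2 :: "('a, 'b) qf_alg_scheme \<Rightarrow> bool" where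
  "ax2 L \<longleftrightarrow> (\<forall>n k \<alpha>. is_subst n k \<alpha> \<longrightarrow>
      sb L n k \<alpha> (zer L n) = zer L k \<and> sb L n k \<alpha> (one L n) = one L k \<and>
      (\<forall>x\<in>car L n. \<forall>y\<in>car L n.
         sb L n k \<alpha> (jn L n x y) = jn L k (sb L n k \<alpha> x) (sb L n k \<alpha> y) \<and>
         sb L n k \<alpha> (mt L n x y) = mt L k (sb L n k \<alpha> x) (sb L n k \<alpha> y)))"

text \<open>For extensional substitutions alpha : k -> n, beta : n -> m the plain
  composition beta o alpha is the extensional representation of the composite.\<close>
definition ax3 :: "('a, 'b) qf_alg_scheme \<Rightarrow> bool" where
  "ax3 L \<longleftrightarrow> (\<forall>k n m \<alpha> \<beta>. is_subst k n \<alpha> \<longrightarrow> is_subst n m \<beta> \<longrightarrow>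
      (\<forall>r\<in>car L k. sb L k m (\<beta> \<circ> \<alpha>) r = sb L n m \<beta> (sb L k n \<alpha> r)))"

definition ax4 :: "('a, 'b) qf_alg_scheme \<Rightarrow> bool" where
  "ax4 L \<longleftrightarrow> (\<forall>n. \<forall>r\<in>car L n. sb L n n (id_subst n) r = r)"

definition ax5 :: "('a, 'b) qf_alg_scheme \<Rightarrow> bool" where
  "ax5 L \<longleftrightarrow> (\<forall>n k \<alpha>. is_subst n k \<alpha> \<longrightarrow>
      (\<forall>r\<in>car L n. sb L n k \<alpha> (ng L n r) = ng L k (sb L n k \<alpha> r)))"

definition ax6 :: "('a, 'b) qf_alg_scheme \<Rightarrow> bool" where
  "ax6 L \<longleftrightarrow> (\<forall>n. \<forall>r\<in>car L n. jn L n r (ng L n r) = one L n \<and> mt L n r (ng L n r) = zer L n)"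

definition qf_axioms :: "('a, 'b) qf_alg_scheme \<Rightarrow> bool" where
  "qf_axioms L \<longleftrightarrow> ax0 L \<and> ax1 L \<and> ax2 L \<and> ax3 L \<and> ax4 L \<and> ax5 L \<and> ax6 L"

text \<open>The quantifier-free algebra A(W): sort n is the power set of W^n, with
  n-tuples represented as lists of length n (entry i of the paper is xs ! (i-1)).\<close>
definition tuples :: "'w set \<Rightarrow> nat \<Rightarrow> 'w list set" where
  "tuples W n = {xs. length xs = n \<and> set xs \<subseteq> W}"

definition subst_tuple :: "nat \<Rightarrow> (nat \<Rightarrow> nat) \<Rightarrow> 'w list \<Rightarrow> 'w list" where
  "subst_tuple n \<alpha> xs = map (\<lambda>i. xs ! (\<alpha> i - 1)) [1..<n+1]"

definition subst_rel :: "'w set \<Rightarrow> nat \<Rightarrow> nat \<Rightarrow> (nat \<Rightarrow> nat) \<Rightarrow> 'w list set \<Rightarrow> 'w list set" where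
  "subst_rel W n k \<alpha> r = {xs \<in> tuples W k. subst_tuple n \<alpha> xs \<in> r}"

definition qf_algebra_of :: "'w set \<Rightarrow> 'w list set qf_alg" where
  "qf_algebra_of W = \<lparr> car = (\<lambda>n. Pow (tuples W n)), sb = subst_rel W,
     zer = (\<lambda>n. {}), one = tuples W, jn = (\<lambda>n. (\<union>)), mt = (\<lambda>n. (\<inter>)),
     ng = (\<lambda>n r. tuples W n - r) \<rparr>"

text \<open>Injective homomorphism (sortwise) from L into A(W); its image is a
  subalgebra of A(W) isomorphic to L.\<close>
definition qf_embedding :: "('a, 'b) qf_alg_scheme \<Rightarrow> 'w set \<Rightarrow> (nat \<Rightarrow> 'a \<Rightarrow> 'w list set) \<Rightarrow> bool" where
  "qf_embedding L W h \<longleftrightarrow> (let A = qf_algebra_of W in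
     (\<forall>n. inj_on (h n) (car L n) \<and> h n ` car L n \<subseteq> car A n) \<and>
     (\<forall>n. h n (zer L n) = zer A n \<and> h n (one L n) = one A n) \<and>
     (\<forall>n. \<forall>x\<in>car L n. \<forall>y\<in>car L n.
        h n (jn L n x y) = jn A n (h n x) (h n y) \<and> h n (mt L n x y) = mt A n (h n x) (h n y)) \<and>
     (\<forall>n. \<forall>x\<in>car L n. h n (ng L n x) = ng A n (h n x)) \<and>
     (\<forall>n k \<alpha>. is_subst n k \<alpha> \<longrightarrow> (\<forall>x\<in>car L n. h k (sb L n k \<alpha> x) = sb A n k \<alpha> (h n x))))"

definition embeds_in_qf :: "('a, 'b) qf_alg_scheme \<Rightarrow> 'w set \<Rightarrow> bool" where
  "embeds_in_qf L W \<longleftrightarrow> (\<exists>h. qf_embedding L W h)"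

end

theory Submission
  imports Defs
begin

text \<open>Soundness: the equational axioms hold in every \<open>A(W)\<close> and transfer along an
  injective homomorphism; for axiom (0), if no \<open>r\<^sub>i \<le> s\<^sub>i\<close> held, tuples
  \<open>t\<^sub>i \<in> r\<^sub>i - s\<^sub>i\<close> would concatenate to a tuple in the meet of the
  cylindrified \<open>r\<^sub>i\<close> outside the join of the cylindrified \<open>s\<^sub>i\<close>.

  Completeness is a Henkin-style compactness argument.  A formula is an element r of sort n
  attached to n distinct variables; a set of formulas is consistent if finitely many of them,
  transported to a common context, never meet to zero.  For every pair \<open>r \<noteq> s\<close> the
  diagram puts an element separating them (\<open>r \<and> \<not>s\<close> or \<open>s \<and> \<not>r\<close>)
  on a block of fresh variables; the diagram is consistent precisely by axiom (0).  A maximal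
  consistent extension T (Zorn) decides every formula and commutes with the Boolean operations
  and with substitutions, so reading a tuple of variables through T embeds L into \<open>A(Var)\<close>.
  When sort 1 is trivial, L instead embeds into \<open>A(\<emptyset>)\<close>.\<close>

section \<open>Substitutions acting on tuples\<close>

lemma is_subst_comp: "is_subst k n \<alpha> \<Longrightarrow> is_subst n m \<beta> \<Longrightarrow> is_subst k m (\<beta> \<circ> \<alpha>)"
  unfolding is_subst_def by fastforce

lemma is_subst_id: "is_subst n n (id_subst n)"
  by (simp add: is_subst_def id_subst_def)

lemma is_subst_cyl: "i < length ks \<Longrightarrow> is_subst (ks ! i) (sum_list ks) (cyl ks i)"
proof -
  assume i: "i < length ks"
  have "sum_list ks = sum_list (take (Suc i) ks) + sum_list (drop (Suc i) ks)"
    by (metis append_take_drop_id sum_list_append)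
  also have "sum_list (take (Suc i) ks) = sum_list (take i ks) + ks ! i"
    using i by (simp add: take_Suc_conv_app_nth)
  finally have "sum_list (take i ks) + ks ! i \<le> sum_list ks" by simp
  then show ?thesis unfolding is_subst_def cyl_def by auto
qed

lemma length_subst_tuple [simp]: "length (subst_tuple n \<alpha> xs) = n"
  by (simp add: subst_tuple_def del: upt_Suc)

lemma nth_subst_tuple: "j < n \<Longrightarrow> subst_tuple n \<alpha> xs ! j = xs ! (\<alpha> (Suc j) - 1)"
  by (simp add: subst_tuple_def del: upt_Suc)

lemma set_subst_tuple_subset: "is_subst n k \<alpha> \<Longrightarrow> length xs = k \<Longrightarrow> set (subst_tuple n \<alpha> xs) \<subseteq> set xs"
proof
  fix x assume \<alpha>: "is_subst n k \<alpha>" and xs: "length xs = k" and "x \<in> set (subst_tuple n \<alpha> xs)"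
  then obtain j where j: "j < n" "x = xs ! (\<alpha> (Suc j) - 1)"
    by (auto simp: in_set_conv_nth nth_subst_tuple)
  have "\<alpha> (Suc j) \<in> {1..k}" using \<alpha> j(1) unfolding is_subst_def by auto
  then show "x \<in> set xs" using xs j(2) by auto
qed

lemma subst_tuple_tuples: "is_subst n k \<alpha> \<Longrightarrow> xs \<in> tuples W k \<Longrightarrow> subst_tuple n \<alpha> xs \<in> tuples W n"
  using set_subst_tuple_subset[of n k \<alpha> xs] by (auto simp: tuples_def)

lemma subst_tuple_comp:
  assumes \<alpha>: "is_subst k n \<alpha>"
  shows "subst_tuple k \<alpha> (subst_tuple n \<beta> xs) = subst_tuple k (\<beta> \<circ> \<alpha>) xs"
proof (rule nth_equalityI)
  fix j assume "j < length (subst_tuple k \<alpha> (subst_tuple n \<beta> xs))"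
  then have j: "j < k" by simp
  then have "\<alpha> (Suc j) \<in> {1..n}" using \<alpha> unfolding is_subst_def by auto
  then have "\<alpha> (Suc j) - 1 < n" "Suc (\<alpha> (Suc j) - 1) = \<alpha> (Suc j)" by auto
  then show "subst_tuple k \<alpha> (subst_tuple n \<beta> xs) ! j = subst_tuple k (\<beta> \<circ> \<alpha>) xs ! j"
    using j nth_subst_tuple[of "\<alpha> (Suc j) - 1" n \<beta> xs] by (simp add: nth_subst_tuple)
qed simp

lemma subst_tuple_id: "length xs = n \<Longrightarrow> subst_tuple n (id_subst n) xs = xs"
  by (rule nth_equalityI) (auto simp: nth_subst_tuple id_subst_def)

lemma subst_rel_comp:
  "is_subst k n \<alpha> \<Longrightarrow> is_subst n m \<beta> \<Longrightarrow>
   subst_rel W k m (\<beta> \<circ> \<alpha>) R = subst_rel W n m \<beta> (subst_rel W k n \<alpha> R)"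
  by (auto simp: subst_rel_def subst_tuple_comp subst_tuple_tuples)

lemma subst_rel_id: "R \<subseteq> tuples W n \<Longrightarrow> subst_rel W n n (id_subst n) R = R"
  by (auto simp: subst_rel_def subst_tuple_id tuples_def)

lemma subst_rel_compl:
  "is_subst n k \<alpha> \<Longrightarrow> subst_rel W n k \<alpha> (tuples W n - R) = tuples W k - subst_rel W n k \<alpha> R"
  unfolding subst_rel_def using subst_tuple_tuples by blast

lemma subst_rel_tuples: "is_subst n k \<alpha> \<Longrightarrow> subst_rel W n k \<alpha> (tuples W n) = tuples W k"
  unfolding subst_rel_def using subst_tuple_tuples by blast

lemma nth_concat_block:
  "i < length bs \<Longrightarrow> j < length (bs ! i) \<Longrightarrow>
   concat bs ! (sum_list (map length (take i bs)) + j) = bs ! i ! j"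
proof (induction bs arbitrary: i)
  case (Cons b bs)
  then show ?case by (cases i) (auto simp: nth_append)
qed simp

lemma sum_take_length_le:
  "i < length bs \<Longrightarrow> sum_list (map length (take i bs)) + length (bs ! i) \<le> length (concat bs)"
proof (induction bs arbitrary: i)
  case (Cons b bs)
  then show ?case by (cases i) auto
qed simp

lemma subst_tuple_cyl_concat:
  assumes i: "i < length bs"
  shows "subst_tuple (length (bs ! i)) (cyl (map length bs) i) (concat bs) = bs ! i"
proof (rule nth_equalityI)
  fix j assume "j < length (subst_tuple (length (bs ! i)) (cyl (map length bs) i) (concat bs))"
  then have j: "j < length (bs ! i)" by simp
  then have "cyl (map length bs) i (Suc j) - 1 = sum_list (map length (take i bs)) + j"
    using i by (simp add: cyl_def take_map)
  then show "subst_tuple (length (bs ! i)) (cyl (map length bs) i) (concat bs) ! j = bs ! i ! j"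
    using j nth_concat_block[OF i j] by (simp add: nth_subst_tuple)
qed simp

lemma concat_tuples_cyl:
  assumes ts: "\<And>i. i < length ks \<Longrightarrow> ts i \<in> tuples W (ks ! i)"
  defines "xs \<equiv> concat (map ts [0..<length ks])"
  shows "xs \<in> tuples W (sum_list ks)"
    and "i < length ks \<Longrightarrow> subst_tuple (ks ! i) (cyl ks i) xs = ts i"
proof -
  define bs where "bs = map ts [0..<length ks]"
  have ks: "map length bs = ks" by (rule nth_equalityI) (use ts in \<open>auto simp: bs_def tuples_def\<close>)
  have "length xs = sum_list ks" using ks by (simp add: xs_def bs_def[symmetric] length_concat)
  moreover have "set xs \<subseteq> W"
  proof
    fix v assume "v \<in> set xs"
    then obtain i where "i < length ks" "v \<in> set (ts i)" by (auto simp: xs_def)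
    then show "v \<in> W" using ts by (auto simp: tuples_def)
  qed
  ultimately show "xs \<in> tuples W (sum_list ks)" by (simp add: tuples_def)
  assume i: "i < length ks"
  then have "i < length bs" "bs ! i = ts i" "length (ts i) = ks ! i"
    using ts[OF i] by (simp_all add: bs_def tuples_def)
  then show "subst_tuple (ks ! i) (cyl ks i) xs = ts i"
    using subst_tuple_cyl_concat[of i bs] unfolding ks by (simp add: xs_def bs_def)
qed

section \<open>Reindexing between contexts of variables\<close>

fun pos :: "'w list \<Rightarrow> 'w \<Rightarrow> nat" where
  "pos [] x = 0"
| "pos (y # ys) x = (if x = y then 0 else Suc (pos ys x))"

lemma pos_less_length: "x \<in> set us \<Longrightarrow> pos us x < length us"
  by (induction us) auto

lemma nth_pos: "x \<in> set us \<Longrightarrow> us ! pos us x = x"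
  by (induction us) auto

lemma pos_nth: "distinct us \<Longrightarrow> i < length us \<Longrightarrow> pos us (us ! i) = i"
proof (induction us arbitrary: i)
  case (Cons a us)
  then show ?case by (cases i) (auto simp: nth_mem)
qed simp

text \<open>Lists of variables serve as contexts: \<open>reindex xs us\<close> is the substitution
  \<open>length xs \<rightarrow> length us\<close> sending position i of xs to the position of the same variable
  in us.  Variables of xs missing from us are sent to position 1, which is harmless junk
  since it is only used when \<open>set xs \<subseteq> set us\<close> or \<open>us \<noteq> []\<close>.\<close>
definition reindex :: "'w list \<Rightarrow> 'w list \<Rightarrow> nat \<Rightarrow> nat" where
  "reindex xs us = (\<lambda>i. if 1 \<le> i \<and> i \<le> length xs then
      (if xs ! (i - 1) \<in> set us then pos us (xs ! (i - 1)) + 1 else 1) else 0)"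

lemma reindex_mem:
  "1 \<le> i \<Longrightarrow> i \<le> length xs \<Longrightarrow> xs ! (i - 1) \<in> set us \<Longrightarrow> reindex xs us i = pos us (xs ! (i - 1)) + 1"
  by (simp add: reindex_def)

lemma reindex_out_of_range: "\<not> (1 \<le> i \<and> i \<le> length xs) \<Longrightarrow> reindex xs us i = 0"
  by (simp add: reindex_def)

lemma is_subst_reindex:
  assumes "set xs \<subseteq> set us \<or> us \<noteq> []"
  shows "is_subst (length xs) (length us) (reindex xs us)"
proof -
  have "reindex xs us i \<in> {1..length us}" if i: "i \<in> {1..length xs}" for i
  proof (cases "xs ! (i - 1) \<in> set us")
    case True
    then show ?thesis using i pos_less_length[OF True] by (simp add: reindex_def)
  next
    case False
    have "xs ! (i - 1) \<in> set xs" using i by (intro nth_mem) auto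
    then have "us \<noteq> []" using assms False by auto
    then show ?thesis using i False by (simp add: reindex_def Suc_le_eq)
  qed
  then show ?thesis unfolding is_subst_def by (auto simp: reindex_def)
qed

lemma reindex_comp:
  assumes "set xs \<subseteq> set vs" "set xs \<subseteq> set us"
  shows "reindex vs us \<circ> reindex xs vs = reindex xs us"
proof
  fix i
  show "(reindex vs us \<circ> reindex xs vs) i = reindex xs us i"
  proof (cases "1 \<le> i \<and> i \<le> length xs")
    case True
    then have "xs ! (i - 1) \<in> set xs" by (auto intro: nth_mem)
    then have x: "xs ! (i - 1) \<in> set vs" "xs ! (i - 1) \<in> set us" using assms by auto
    then show ?thesis using True pos_less_length[OF x(1)] nth_pos[OF x(1)] by (simp add: reindex_mem)
  qed (simp add: reindex_out_of_range)
qed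

lemma reindex_self: "distinct vs \<Longrightarrow> reindex vs vs = id_subst (length vs)"
  by (rule ext) (auto simp: reindex_def id_subst_def pos_nth)

lemma reindex_retraction:
  assumes "distinct vs" "set vs \<subseteq> set us"
  shows "reindex us vs \<circ> reindex vs us = id_subst (length vs)"
  using reindex_comp[OF assms(2) order_refl] reindex_self[OF assms(1)] by simp

lemma reindex_concat_eq_cyl:
  assumes d: "distinct (concat bs)" and i: "i < length bs"
  shows "reindex (bs ! i) (concat bs) = cyl (map length bs) i"
proof
  fix l
  let ?S = "sum_list (map length (take i bs))"
  show "reindex (bs ! i) (concat bs) l = cyl (map length bs) i l"
  proof (cases "1 \<le> l \<and> l \<le> length (bs ! i)")
    case True
    then have lt: "?S + (l - 1) < length (concat bs)" using sum_take_length_le[OF i] by linarith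
    have eq: "concat bs ! (?S + (l - 1)) = bs ! i ! (l - 1)"
      using True by (intro nth_concat_block[OF i]) linarith
    then have "bs ! i ! (l - 1) \<in> set (concat bs)" using lt by (metis nth_mem)
    moreover have "pos (concat bs) (bs ! i ! (l - 1)) = ?S + (l - 1)"
      using pos_nth[OF d lt] eq by simp
    ultimately show ?thesis using True i by (simp add: reindex_def cyl_def take_map)
  qed (use i in \<open>auto simp: reindex_def cyl_def\<close>)
qed

lemma reindex_subst_tuple:
  assumes \<alpha>: "is_subst n k \<alpha>" and xs: "length xs = k" and us: "set xs \<subseteq> set us"
  shows "reindex (subst_tuple n \<alpha> xs) us = reindex xs us \<circ> \<alpha>"
proof
  fix i
  show "reindex (subst_tuple n \<alpha> xs) us i = (reindex xs us \<circ> \<alpha>) i"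
  proof (cases "1 \<le> i \<and> i \<le> n")
    case True
    then have \<alpha>i: "\<alpha> i \<in> {1..k}" using \<alpha> unfolding is_subst_def by auto
    have "i - 1 < n" using True by linarith
    then have "subst_tuple n \<alpha> xs ! (i - 1) = xs ! (\<alpha> i - 1)"
      using True nth_subst_tuple[of "i - 1" n \<alpha> xs] by simp
    moreover have "xs ! (\<alpha> i - 1) \<in> set us" using \<alpha>i xs us by (auto intro!: nth_mem)
    ultimately show ?thesis using True \<alpha>i xs by (simp add: reindex_mem)
  next
    case False
    then have "\<alpha> i = 0" using \<alpha> unfolding is_subst_def by auto
    then show ?thesis using False by (simp add: reindex_out_of_range)
  qed
qed

section \<open>Algebras satisfying the axioms\<close>

lemma big_mt_simps [simp]:
  "big_mt L n [] = one L n" "big_mt L n (x # xs) = mt L n x (big_mt L n xs)"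
  by (simp_all add: big_mt_def)

lemma big_jn_simps [simp]:
  "big_jn L n [] = zer L n" "big_jn L n (x # xs) = jn L n x (big_jn L n xs)"
  by (simp_all add: big_jn_def)

locale qf_alg_closed =
  fixes L :: "('a, 'b) qf_alg_scheme"
  assumes closed: "qf_multisorted_algebra L"
begin

lemma zer_closed [simp]: "zer L n \<in> car L n"
  using closed unfolding qf_multisorted_algebra_def by blast

lemma one_closed [simp]: "one L n \<in> car L n"
  using closed unfolding qf_multisorted_algebra_def by blast

lemma jn_closed [simp]: "x \<in> car L n \<Longrightarrow> y \<in> car L n \<Longrightarrow> jn L n x y \<in> car L n"
  using closed unfolding qf_multisorted_algebra_def by blast

lemma mt_closed [simp]: "x \<in> car L n \<Longrightarrow> y \<in> car L n \<Longrightarrow> mt L n x y \<in> car L n"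
  using closed unfolding qf_multisorted_algebra_def by blast

lemma ng_closed [simp]: "x \<in> car L n \<Longrightarrow> ng L n x \<in> car L n"
  using closed unfolding qf_multisorted_algebra_def by blast

lemma sb_closed [simp]: "is_subst n k \<alpha> \<Longrightarrow> x \<in> car L n \<Longrightarrow> sb L n k \<alpha> x \<in> car L k"
  using closed unfolding qf_multisorted_algebra_def by blast

lemma big_mt_closed [simp]: "set xs \<subseteq> car L n \<Longrightarrow> big_mt L n xs \<in> car L n"
  by (induction xs) auto

lemma big_jn_closed [simp]: "set xs \<subseteq> car L n \<Longrightarrow> big_jn L n xs \<in> car L n"
  by (induction xs) auto

end

locale qf_model = qf_alg_closed +
  assumes satisfies_axioms: "qf_axioms L"
begin

lemma jn_comm: "x \<in> car L n \<Longrightarrow> y \<in> car L n \<Longrightarrow> jn L n x y = jn L n y x"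
  using satisfies_axioms unfolding qf_axioms_def ax1_def by blast

lemma mt_comm: "x \<in> car L n \<Longrightarrow> y \<in> car L n \<Longrightarrow> mt L n x y = mt L n y x"
  using satisfies_axioms unfolding qf_axioms_def ax1_def by blast

lemma mt_assoc:
  "x \<in> car L n \<Longrightarrow> y \<in> car L n \<Longrightarrow> z \<in> car L n \<Longrightarrow> mt L n (mt L n x y) z = mt L n x (mt L n y z)"
  using satisfies_axioms unfolding qf_axioms_def ax1_def by blast

lemma jn_absorb: "x \<in> car L n \<Longrightarrow> y \<in> car L n \<Longrightarrow> jn L n x (mt L n x y) = x"
  using satisfies_axioms unfolding qf_axioms_def ax1_def by blast

lemma mt_absorb: "x \<in> car L n \<Longrightarrow> y \<in> car L n \<Longrightarrow> mt L n x (jn L n x y) = x"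
  using satisfies_axioms unfolding qf_axioms_def ax1_def by blast

lemma jn_zer: "x \<in> car L n \<Longrightarrow> jn L n x (zer L n) = x"
  using satisfies_axioms one_closed unfolding qf_axioms_def ax1_def by blast

lemma mt_one: "x \<in> car L n \<Longrightarrow> mt L n x (one L n) = x"
  using satisfies_axioms one_closed unfolding qf_axioms_def ax1_def by blast

lemma mt_jn_distrib:
  "x \<in> car L n \<Longrightarrow> y \<in> car L n \<Longrightarrow> z \<in> car L n \<Longrightarrow>
   mt L n x (jn L n y z) = jn L n (mt L n x y) (mt L n x z)"
  using satisfies_axioms unfolding qf_axioms_def ax1_def by blast

lemma jn_ng: "x \<in> car L n \<Longrightarrow> jn L n x (ng L n x) = one L n"
  using satisfies_axioms unfolding qf_axioms_def ax6_def by blast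

lemma mt_ng: "x \<in> car L n \<Longrightarrow> mt L n x (ng L n x) = zer L n"
  using satisfies_axioms unfolding qf_axioms_def ax6_def by blast

lemma mt_idem: "x \<in> car L n \<Longrightarrow> mt L n x x = x"
  using mt_absorb[of x n "mt L n x x"] jn_absorb[of x n x] by simp

lemma zer_jn: "x \<in> car L n \<Longrightarrow> jn L n (zer L n) x = x"
  using jn_comm[of x n "zer L n"] jn_zer[of x n] by simp

lemma zer_mt: "x \<in> car L n \<Longrightarrow> mt L n (zer L n) x = zer L n"
  using mt_absorb[of "zer L n" n x] zer_jn[of x n] by simp

lemma mt_zer: "x \<in> car L n \<Longrightarrow> mt L n x (zer L n) = zer L n"
  using mt_comm[of x n "zer L n"] zer_mt[of x n] by simp

lemma one_mt: "x \<in> car L n \<Longrightarrow> mt L n (one L n) x = x"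
  using mt_comm[of x n "one L n"] mt_one[of x n] by simp

lemma ng_one: "ng L n (one L n) = zer L n"
  using mt_ng[of "one L n" n] one_mt[of "ng L n (one L n)" n] by simp

lemma ng_zer: "ng L n (zer L n) = one L n"
  using jn_ng[of "zer L n" n] zer_jn[of "ng L n (zer L n)" n] by simp

lemma jn_mt_distrib:
  "x \<in> car L n \<Longrightarrow> y \<in> car L n \<Longrightarrow> z \<in> car L n \<Longrightarrow>
   mt L n (jn L n y z) x = jn L n (mt L n y x) (mt L n z x)"
  using mt_jn_distrib[of x n y z] mt_comm[of x n] by simp

lemma eq_zer_if_mt_and_mt_ng_eq_zer:
  assumes "x \<in> car L n" "r \<in> car L n" "mt L n r x = zer L n" "mt L n (ng L n r) x = zer L n"
  shows "x = zer L n"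
proof -
  have "x = mt L n (jn L n r (ng L n r)) x" using assms by (simp add: jn_ng one_mt)
  also have "\<dots> = jn L n (mt L n r x) (mt L n (ng L n r) x)" using assms by (simp add: jn_mt_distrib)
  finally show ?thesis using assms by (simp add: jn_zer)
qed

lemma mt_mt_ng_left: "r \<in> car L n \<Longrightarrow> s \<in> car L n \<Longrightarrow> mt L n (mt L n r s) (ng L n r) = zer L n"
  using mt_comm[of r n s] mt_assoc[of s n r "ng L n r"] mt_ng[of r n] mt_zer[of s n] by simp

lemma mt_mt_ng_mt: "r \<in> car L n \<Longrightarrow> s \<in> car L n \<Longrightarrow> mt L n r (mt L n s (ng L n (mt L n r s))) = zer L n"
  using mt_assoc[of r n s "ng L n (mt L n r s)"] mt_ng[of "mt L n r s" n] by simp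

lemma mt_ng_jn: "r \<in> car L n \<Longrightarrow> s \<in> car L n \<Longrightarrow> mt L n r (ng L n (jn L n r s)) = zer L n"
  using mt_absorb[of r n s] mt_assoc[of r n "jn L n r s" "ng L n (jn L n r s)"]
    mt_ng[of "jn L n r s" n] mt_zer[of r n] by simp

lemma mt_jn_ng_ng:
  assumes "r \<in> car L n" "s \<in> car L n"
  shows "mt L n (jn L n r s) (mt L n (ng L n r) (ng L n s)) = zer L n"
proof -
  have "mt L n r (mt L n (ng L n r) (ng L n s)) = zer L n"
    using assms mt_assoc[of r n "ng L n r" "ng L n s"] mt_ng[of r n] zer_mt[of "ng L n s" n] by simp
  moreover have "mt L n s (mt L n (ng L n r) (ng L n s)) = zer L n"
    using assms mt_comm[of "ng L n r" n "ng L n s"] mt_assoc[of s n "ng L n s" "ng L n r"]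
      mt_ng[of s n] zer_mt[of "ng L n r" n] by simp
  ultimately show ?thesis using assms by (simp add: jn_mt_distrib jn_zer)
qed

lemma mt_ng_neq_zer_if_neq:
  assumes "r \<in> car L n" "s \<in> car L n" "r \<noteq> s"
  shows "mt L n r (ng L n s) \<noteq> zer L n \<or> mt L n s (ng L n r) \<noteq> zer L n"
proof (rule ccontr)
  assume "\<not> ?thesis"
  then have z: "mt L n r (ng L n s) = zer L n" "mt L n s (ng L n r) = zer L n" by auto
  have "r = mt L n r (jn L n s (ng L n s))" using assms by (simp add: jn_ng mt_one)
  also have "\<dots> = mt L n r s" using assms z by (simp add: mt_jn_distrib jn_zer)
  finally have rs: "r = mt L n r s" .
  have "s = mt L n s (jn L n r (ng L n r))" using assms by (simp add: jn_ng mt_one)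
  also have "\<dots> = mt L n s r" using assms z by (simp add: mt_jn_distrib jn_zer)
  finally have "s = mt L n s r" .
  with rs show False using assms mt_comm[of r n s] by simp
qed

end

context qf_model
begin

lemma sb_zer: "is_subst n k \<alpha> \<Longrightarrow> sb L n k \<alpha> (zer L n) = zer L k"
  using satisfies_axioms unfolding qf_axioms_def ax2_def by blast

lemma sb_one: "is_subst n k \<alpha> \<Longrightarrow> sb L n k \<alpha> (one L n) = one L k"
  using satisfies_axioms unfolding qf_axioms_def ax2_def by blast

lemma sb_jn: "is_subst n k \<alpha> \<Longrightarrow> x \<in> car L n \<Longrightarrow> y \<in> car L n \<Longrightarrow>
   sb L n k \<alpha> (jn L n x y) = jn L k (sb L n k \<alpha> x) (sb L n k \<alpha> y)"
  using satisfies_axioms unfolding qf_axioms_def ax2_def by blast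

lemma sb_mt: "is_subst n k \<alpha> \<Longrightarrow> x \<in> car L n \<Longrightarrow> y \<in> car L n \<Longrightarrow>
   sb L n k \<alpha> (mt L n x y) = mt L k (sb L n k \<alpha> x) (sb L n k \<alpha> y)"
  using satisfies_axioms unfolding qf_axioms_def ax2_def by blast

lemma sb_comp: "is_subst k n \<alpha> \<Longrightarrow> is_subst n m \<beta> \<Longrightarrow> r \<in> car L k \<Longrightarrow>
   sb L k m (\<beta> \<circ> \<alpha>) r = sb L n m \<beta> (sb L k n \<alpha> r)"
  using satisfies_axioms unfolding qf_axioms_def ax3_def by blast

lemma sb_id: "r \<in> car L n \<Longrightarrow> sb L n n (id_subst n) r = r"
  using satisfies_axioms unfolding qf_axioms_def ax4_def by blast

lemma sb_ng: "is_subst n k \<alpha> \<Longrightarrow> x \<in> car L n \<Longrightarrow> sb L n k \<alpha> (ng L n x) = ng L k (sb L n k \<alpha> x)"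
  using satisfies_axioms unfolding qf_axioms_def ax5_def by blast

lemma sb_big_mt: "is_subst n k \<alpha> \<Longrightarrow> set xs \<subseteq> car L n \<Longrightarrow>
   sb L n k \<alpha> (big_mt L n xs) = big_mt L k (map (sb L n k \<alpha>) xs)"
proof (induction xs)
  case (Cons x xs)
  then show ?case by (simp add: sb_mt)
qed (simp add: sb_one)

lemma big_mt_absorb_mem:
  "set xs \<subseteq> car L n \<Longrightarrow> y \<in> set xs \<Longrightarrow> mt L n (big_mt L n xs) y = big_mt L n xs"
proof (induction xs)
  case (Cons x xs)
  then have x: "x \<in> car L n" and xs: "big_mt L n xs \<in> car L n" and y: "y \<in> car L n" by auto
  show ?case
  proof (cases "y = x")
    case True
    then show ?thesis using x xs mt_assoc[of x n "big_mt L n xs" x] mt_comm[of "big_mt L n xs" n x]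
        mt_assoc[of x n x "big_mt L n xs", symmetric] mt_idem[of x n]
      by simp
  next
    case False
    then show ?thesis using Cons x xs y mt_assoc[of x n "big_mt L n xs" y] by simp
  qed
qed simp

lemma big_mt_antimono:
  "set xs \<subseteq> car L n \<Longrightarrow> set ys \<subseteq> set xs \<Longrightarrow>
   mt L n (big_mt L n xs) (big_mt L n ys) = big_mt L n xs"
proof (induction ys)
  case Nil
  then show ?case by (simp add: mt_one)
next
  case (Cons y ys)
  then have "y \<in> car L n" "set ys \<subseteq> car L n" by auto
  then have "mt L n (big_mt L n xs) (big_mt L n (y # ys)) = mt L n (mt L n (big_mt L n xs) y) (big_mt L n ys)"
    using Cons.prems by (simp add: mt_assoc)
  then show ?case using Cons big_mt_absorb_mem by simp
qed

lemma big_mt_eq_zer_if_subset: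
  "set xs \<subseteq> car L n \<Longrightarrow> set ys \<subseteq> set xs \<Longrightarrow> big_mt L n ys = zer L n \<Longrightarrow> big_mt L n xs = zer L n"
  using big_mt_antimono[of xs n ys] mt_zer[of "big_mt L n xs" n] by simp

lemma le_zer_iff: "x \<in> car L n \<Longrightarrow> le_in L n x (zer L n) \<longleftrightarrow> x = zer L n"
  unfolding le_in_def using mt_zer[of x n] by simp

text \<open>Axiom (0) with all \<open>s\<^sub>i = 0\<close>.\<close>
lemma partitioned_meet_neq_zer:
  assumes len: "length rs = length ks"
    and rs: "\<forall>i<length ks. rs ! i \<in> car L (ks ! i) \<and> rs ! i \<noteq> zer L (ks ! i)"
  shows "big_mt L (sum_list ks) (map (\<lambda>i. sb L (ks ! i) (sum_list ks) (cyl ks i) (rs ! i)) [0..<length ks])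
         \<noteq> zer L (sum_list ks)"
proof
  let ?N = "sum_list ks"
  let ?cyls = "\<lambda>xs. map (\<lambda>i. sb L (ks ! i) ?N (cyl ks i) (xs ! i)) [0..<length ks]"
  define zs where "zs = map (\<lambda>i. zer L (ks ! i)) [0..<length ks]"
  assume "big_mt L ?N (?cyls rs) = zer L ?N"
  moreover have "big_jn L ?N (?cyls zs) = zer L ?N"
  proof -
    have "big_jn L ?N xs = zer L ?N" if "set xs \<subseteq> {zer L ?N}" for xs
      using that by (induction xs) (auto simp: jn_zer)
    moreover have "set (?cyls zs) \<subseteq> {zer L ?N}"
      using is_subst_cyl sb_zer by (auto simp: zs_def)
    ultimately show ?thesis by blast
  qed
  ultimately have "le_in L ?N (big_mt L ?N (?cyls rs)) (big_jn L ?N (?cyls zs))"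
    using le_zer_iff[of "zer L ?N" ?N] by simp
  moreover have "length zs = length ks" "\<forall>i<length ks. rs ! i \<in> car L (ks ! i) \<and> zs ! i \<in> car L (ks ! i)"
    using rs by (auto simp: zs_def)
  ultimately obtain i where "i < length ks" "le_in L (ks ! i) (rs ! i) (zs ! i)"
    using satisfies_axioms len unfolding qf_axioms_def ax0_def by blast
  then show False using rs le_zer_iff[of "rs ! i" "ks ! i"] by (simp add: zs_def)
qed

lemma one_neq_zer_sort0: "one L 0 \<noteq> zer L 0"
  using partitioned_meet_neq_zer[of "[]" "[]"] by simp

lemma sort0_cases:
  assumes x: "x \<in> car L 0"
  shows "x = zer L 0 \<or> x = one L 0"
proof (rule ccontr)
  assume nx: "\<not> ?thesis"
  have "ng L 0 x \<noteq> zer L 0" using nx jn_ng[OF x] jn_zer[OF x] by auto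
  then have "big_mt L 0 (map (\<lambda>i. sb L ([0,0] ! i) 0 (cyl [0,0] i) ([x, ng L 0 x] ! i)) [0, 1]) \<noteq> zer L 0"
    using partitioned_meet_neq_zer[of "[x, ng L 0 x]" "[0, 0]"] x nx
    by (simp add: upt_rec less_Suc_eq nth_Cons split: nat.splits)
  moreover have "cyl [0, 0] 0 = id_subst 0" "cyl [0, 0] 1 = id_subst 0"
    by (auto simp: cyl_def id_subst_def)
  ultimately show False using x by (simp add: sb_id mt_one mt_ng)
qed

lemma sb_reindex_comp:
  assumes "set vs \<subseteq> set ws" "set ws \<subseteq> set us" "r \<in> car L (length vs)"
  shows "sb L (length ws) (length us) (reindex ws us) (sb L (length vs) (length ws) (reindex vs ws) r)
       = sb L (length vs) (length us) (reindex vs us) r"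
  using sb_comp[of "length vs" "length ws" "reindex vs ws" "length us" "reindex ws us" r]
    is_subst_reindex reindex_comp assms by (metis order_trans)

end

section \<open>The degenerate case\<close>

locale qf_degenerate_model = qf_model +
  assumes one_eq_zer_sort1: "one L 1 = zer L 1"
begin

lemma eq_zer_if_sort_neq_0: "n \<noteq> 0 \<Longrightarrow> x \<in> car L n \<Longrightarrow> x = zer L n"
proof -
  assume n: "n \<noteq> 0" and x: "x \<in> car L n"
  have "is_subst 1 n (\<lambda>i. if i = 1 then 1 else 0)" using n by (simp add: is_subst_def)
  then have "one L n = zer L n" using sb_one sb_zer one_eq_zer_sort1 by metis
  then show ?thesis using mt_one[OF x] mt_zer[OF x] by simp
qed

text \<open>The only nonempty relation of \<open>A(\<emptyset>)\<close> is the truth value \<open>{[]}\<close> of sort 0.\<close>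
definition truth_hom :: "nat \<Rightarrow> 'a \<Rightarrow> 'w list set" where
  "truth_hom n r = (if n = 0 \<and> r = one L 0 then {[]} else {})"

lemma inj_on_truth_hom: "inj_on (truth_hom n) (car L n)"
proof (cases "n = 0")
  case True
  then show ?thesis using sort0_cases one_neq_zer_sort0 by (auto simp: inj_on_def truth_hom_def)
qed (metis inj_onI eq_zer_if_sort_neq_0)

lemma truth_hom_jn:
  assumes "x \<in> car L n" "y \<in> car L n"
  shows "truth_hom n (jn L n x y) = truth_hom n x \<union> truth_hom n y"
proof (cases "n = 0")
  case True
  have "jn L 0 (one L 0) (one L 0) = one L 0"
    using jn_absorb[of "one L 0" 0 "one L 0"] mt_one[of "one L 0" 0] by simp
  then show ?thesis using True assms sort0_cases[of x] sort0_cases[of y] one_neq_zer_sort0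
    by (auto simp: truth_hom_def jn_zer zer_jn)
qed (simp add: truth_hom_def)

lemma truth_hom_mt:
  assumes "x \<in> car L n" "y \<in> car L n"
  shows "truth_hom n (mt L n x y) = truth_hom n x \<inter> truth_hom n y"
proof (cases "n = 0")
  case True
  then show ?thesis using assms sort0_cases[of x] sort0_cases[of y] one_neq_zer_sort0
    by (auto simp: truth_hom_def zer_mt mt_zer mt_one)
qed (simp add: truth_hom_def)

lemma tuples_empty: "tuples {} n = (if n = 0 then {[]} else {})"
  by (auto simp: tuples_def)

lemma truth_hom_ng: "x \<in> car L n \<Longrightarrow> truth_hom n (ng L n x) = tuples {} n - truth_hom n x"
  using sort0_cases[of x] one_neq_zer_sort0 ng_one[of 0] ng_zer[of 0]
  by (cases "n = 0") (auto simp: truth_hom_def tuples_empty)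

lemma truth_hom_sb:
  assumes \<alpha>: "is_subst n k \<alpha>" and x: "x \<in> car L n"
  shows "truth_hom k (sb L n k \<alpha> x) = subst_rel {} n k \<alpha> (truth_hom n x)"
proof (cases "k = 0")
  case True
  then have "n = 0" using \<alpha> unfolding is_subst_def by (metis atLeastAtMost_iff le_zero_eq less_one not_less)
  moreover have "\<alpha> = id_subst 0" using \<alpha> \<open>n = 0\<close> unfolding is_subst_def id_subst_def by auto
  ultimately show ?thesis using True x sb_id
    by (auto simp: truth_hom_def subst_rel_def tuples_empty subst_tuple_def)
qed (simp add: truth_hom_def subst_rel_def tuples_empty)

lemma qf_embedding_truth_hom: "qf_embedding L {} truth_hom"
proof -
  have constants: "truth_hom n (zer L n) = {}" "truth_hom n (one L n) = tuples {} n"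
    and range: "truth_hom n ` car L n \<subseteq> Pow (tuples {} n)" for n
    using one_neq_zer_sort0 by (auto simp: truth_hom_def tuples_empty)
  show ?thesis unfolding qf_embedding_def Let_def qf_algebra_of_def
    by (simp add: constants range inj_on_truth_hom truth_hom_jn truth_hom_mt truth_hom_ng truth_hom_sb)
qed

end

section \<open>The canonical model\<close>

text \<open>The variables of the canonical model: \<open>(n, r, s, i)\<close> is the i-th variable of a
  fresh block of n variables reserved for separating the distinct elements r, s of sort n.\<close>
type_synonym 'a var = "nat \<times> 'a \<times> 'a \<times> nat"

definition fresh_block :: "nat \<Rightarrow> 'a \<Rightarrow> 'a \<Rightarrow> 'a var list" where
  "fresh_block n r s = map (\<lambda>i. (n, r, s, i)) [0..<n]"

lemma length_fresh_block [simp]: "length (fresh_block n r s) = n"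
  by (simp add: fresh_block_def)

lemma distinct_concat_fresh_blocks:
  "distinct ps \<Longrightarrow> distinct (concat (map (\<lambda>(n, r, s). fresh_block n r s) ps))"
  by (induction ps) (auto simp: fresh_block_def distinct_map inj_on_def)

context qf_alg_closed
begin

text \<open>A formula \<open>(vs, r)\<close> asserts r of the tuple of distinct variables vs; its instances
  in a larger context us are obtained by reindexing.\<close>
definition formulas :: "('v list \<times> 'a) set" where
  "formulas = {(vs, r). distinct vs \<and> r \<in> car L (length vs)}"

definition instances :: "'v list \<Rightarrow> ('v list \<times> 'a) set \<Rightarrow> 'a set" where
  "instances us S = (\<lambda>(vs, r). sb L (length vs) (length us) (reindex vs us) r) ` {(vs, r) \<in> S. set vs \<subseteq> set us}"

definition consistent :: "('v list \<times> 'a) set \<Rightarrow> bool" where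
  "consistent S \<longleftrightarrow> S \<subseteq> formulas \<and>
     (\<forall>us xs. distinct us \<longrightarrow> set xs \<subseteq> instances us S \<longrightarrow> big_mt L (length us) xs \<noteq> zer L (length us))"

definition separator :: "nat \<Rightarrow> 'a \<Rightarrow> 'a \<Rightarrow> 'a" where
  "separator n r s = (if mt L n r (ng L n s) \<noteq> zer L n then mt L n r (ng L n s) else mt L n s (ng L n r))"

definition diagram :: "('a var list \<times> 'a) set" where
  "diagram = {(fresh_block n r s, separator n r s) | n r s. r \<in> car L n \<and> s \<in> car L n \<and> r \<noteq> s}"

end

context qf_model
begin

lemma separator_closed: "r \<in> car L n \<Longrightarrow> s \<in> car L n \<Longrightarrow> separator n r s \<in> car L n"
  by (simp add: separator_def)

lemma separator_neq_zer: "r \<in> car L n \<Longrightarrow> s \<in> car L n \<Longrightarrow> r \<noteq> s \<Longrightarrow> separator n r s \<noteq> zer L n"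
  using mt_ng_neq_zer_if_neq[of r n s] by (auto simp: separator_def)

lemma instances_closed: "S \<subseteq> formulas \<Longrightarrow> instances us S \<subseteq> car L (length us)"
  unfolding instances_def formulas_def using is_subst_reindex by fastforce

lemma instances_insert:
  "set vs \<subseteq> set us \<Longrightarrow>
   instances us (insert (vs, r) S) = insert (sb L (length vs) (length us) (reindex vs us) r) (instances us S)"
  unfolding instances_def by auto

lemma mem_instances_self: "(vs, r) \<in> S \<Longrightarrow> S \<subseteq> formulas \<Longrightarrow> r \<in> instances vs S"
  unfolding instances_def formulas_def using reindex_self sb_id by (force simp: image_iff)

lemma instances_transport:
  assumes S: "S \<subseteq> formulas" and ws: "set ws \<subseteq> set us" and xs: "set xs \<subseteq> instances ws S"
  shows "set (map (sb L (length ws) (length us) (reindex ws us)) xs) \<subseteq> instances us S"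
proof
  fix y assume "y \<in> set (map (sb L (length ws) (length us) (reindex ws us)) xs)"
  then obtain vs r where vr: "(vs, r) \<in> S" "set vs \<subseteq> set ws"
    and y: "y = sb L (length ws) (length us) (reindex ws us) (sb L (length vs) (length ws) (reindex vs ws) r)"
    using xs unfolding instances_def by auto
  have "r \<in> car L (length vs)" using vr S by (auto simp: formulas_def)
  then have "y = sb L (length vs) (length us) (reindex vs us) r" using y vr ws sb_reindex_comp by simp
  then show "y \<in> instances us S" unfolding instances_def using vr ws by force
qed

lemma consistent_Union_chain:
  assumes cons: "\<And>S. S \<in> \<C> \<Longrightarrow> consistent S" and ne: "\<C> \<noteq> {}" and chain: "subset.chain \<A> \<C>"
  shows "consistent (\<Union>\<C>)"
  unfolding consistent_def
proof (intro conjI allI impI)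
  show "\<Union>\<C> \<subseteq> formulas" using cons unfolding consistent_def by blast
  fix us xs assume us: "distinct us" and xs: "set xs \<subseteq> instances us (\<Union>\<C>)"
  let ?g = "\<lambda>(vs, r). sb L (length vs) (length us) (reindex vs us) r"
  obtain F where F: "F \<subseteq> {(vs, r) \<in> \<Union>\<C>. set vs \<subseteq> set us}" "finite F" "set xs = ?g ` F"
    using finite_subset_image[OF finite_set xs[unfolded instances_def]] by blast
  obtain S where S: "S \<in> \<C>" "F \<subseteq> S"
    using finite_subset_Union_chain[OF F(2) _ ne chain] F(1) ne by blast
  then have "set xs \<subseteq> instances us S" using F unfolding instances_def by blast
  then show "big_mt L (length us) xs \<noteq> zer L (length us)" using cons[OF S(1)] us unfolding consistent_def by blast
qed

lemma meet_of_separators_neq_zer: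
  assumes ps: "distinct ps" "\<forall>(n, r, s) \<in> set ps. r \<in> car L n \<and> s \<in> car L n \<and> r \<noteq> s"
  defines "C \<equiv> concat (map (\<lambda>(n, r, s). fresh_block n r s) ps)"
  shows "big_mt L (length C)
           (map (\<lambda>(n, r, s). sb L n (length C) (reindex (fresh_block n r s) C) (separator n r s)) ps)
         \<noteq> zer L (length C)"
proof -
  define bs where "bs = map (\<lambda>(n, r, s). fresh_block n r s) ps"
  define ks where "ks = map length bs"
  define rs where "rs = map (\<lambda>(n, r, s). separator n r s) ps"
  have N: "sum_list ks = length C" by (simp add: C_def bs_def ks_def length_concat)
  have len: "length bs = length ps" "length ks = length ps" "length rs = length ps"
    by (simp_all add: bs_def ks_def rs_def)
  have ith: "ks ! i = n" "rs ! i = separator n r s" "cyl ks i = reindex (fresh_block n r s) C"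
    "r \<in> car L n" "s \<in> car L n" "r \<noteq> s"
    if i: "i < length ps" "ps ! i = (n, r, s)" for i n r s
  proof -
    have b: "bs ! i = fresh_block n r s" using i by (simp add: bs_def)
    then show "ks ! i = n" using i len by (simp add: ks_def)
    show "rs ! i = separator n r s" using i by (simp add: rs_def)
    have "distinct (concat bs)" using distinct_concat_fresh_blocks[OF ps(1)] by (simp add: bs_def)
    then show "cyl ks i = reindex (fresh_block n r s) C"
      using reindex_concat_eq_cyl[of bs i] b i len by (simp add: ks_def C_def bs_def)
    have "(n, r, s) \<in> set ps" using i by (metis nth_mem)
    then show "r \<in> car L n" "s \<in> car L n" "r \<noteq> s" using ps(2) by auto
  qed
  have "\<forall>i<length ks. rs ! i \<in> car L (ks ! i) \<and> rs ! i \<noteq> zer L (ks ! i)"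
  proof (intro allI impI)
    fix i assume "i < length ks"
    then have i: "i < length ps" using len by simp
    obtain n r s where p: "ps ! i = (n, r, s)" by (cases "ps ! i") auto
    show "rs ! i \<in> car L (ks ! i) \<and> rs ! i \<noteq> zer L (ks ! i)"
      using ith[OF i p] separator_closed separator_neq_zer by simp
  qed
  then have "big_mt L (sum_list ks) (map (\<lambda>i. sb L (ks ! i) (sum_list ks) (cyl ks i) (rs ! i)) [0..<length ks])
             \<noteq> zer L (sum_list ks)"
    using len by (intro partitioned_meet_neq_zer) simp_all
  moreover have "map (\<lambda>i. sb L (ks ! i) (sum_list ks) (cyl ks i) (rs ! i)) [0..<length ks]
      = map (\<lambda>(n, r, s). sb L n (length C) (reindex (fresh_block n r s) C) (separator n r s)) ps"
  proof (rule nth_equalityI)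
    fix i assume "i < length (map (\<lambda>i. sb L (ks ! i) (sum_list ks) (cyl ks i) (rs ! i)) [0..<length ks])"
    then have i: "i < length ps" using len by simp
    obtain n r s where p: "ps ! i = (n, r, s)" by (cases "ps ! i") auto
    show "map (\<lambda>i. sb L (ks ! i) (sum_list ks) (cyl ks i) (rs ! i)) [0..<length ks] ! i
        = map (\<lambda>(n, r, s). sb L n (length C) (reindex (fresh_block n r s) C) (separator n r s)) ps ! i"
      using ith(1-3)[OF i p] i len N p by simp
  qed (simp add: len)
  ultimately show ?thesis using N by simp
qed

lemma diagram_subset_formulas: "diagram \<subseteq> formulas"
  unfolding diagram_def formulas_def by (auto simp: separator_closed fresh_block_def distinct_map inj_on_def)

end

locale qf_nondeg_model = qf_model +
  assumes one_neq_zer_sort1: "one L 1 \<noteq> zer L 1"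
begin

lemma one_neq_zer: "one L n \<noteq> zer L n"
proof (cases n)
  case 0
  then show ?thesis using one_neq_zer_sort0 by simp
next
  case (Suc m)
  then have "is_subst n 1 (\<lambda>i. if i \<in> {1..n} then 1 else 0)" by (simp add: is_subst_def)
  then show ?thesis using sb_one sb_zer one_neq_zer_sort1 by metis
qed

lemma sb_reindex_eq_zer_iff:
  assumes vs: "distinct vs" "set vs \<subseteq> set us" and x: "x \<in> car L (length vs)"
  shows "sb L (length vs) (length us) (reindex vs us) x = zer L (length us) \<longleftrightarrow> x = zer L (length vs)"
proof
  have \<alpha>: "is_subst (length vs) (length us) (reindex vs us)" using is_subst_reindex vs by blast
  assume z: "sb L (length vs) (length us) (reindex vs us) x = zer L (length us)"
  show "x = zer L (length vs)"
  proof (cases "vs = []")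
    case True
    then show ?thesis using sort0_cases[of x] x z sb_one[OF \<alpha>] one_neq_zer by auto
  next
    case False
    have \<beta>: "is_subst (length us) (length vs) (reindex us vs)" using is_subst_reindex False by blast
    have "x = sb L (length vs) (length vs) (reindex us vs \<circ> reindex vs us) x"
      using reindex_retraction[OF vs] sb_id[OF x] by simp
    also have "\<dots> = zer L (length vs)" using sb_comp[OF \<alpha> \<beta> x] z sb_zer[OF \<beta>] by simp
    finally show ?thesis .
  qed
qed (use is_subst_reindex assms sb_zer in blast)

lemma meet_of_separators_in_context_neq_zer:
  assumes ps: "distinct ps"
    and sep: "\<forall>(n, r, s) \<in> set ps. r \<in> car L n \<and> s \<in> car L n \<and> r \<noteq> s \<and> set (fresh_block n r s) \<subseteq> set us"
  shows "big_mt L (length us)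
           (map (\<lambda>(n, r, s). sb L n (length us) (reindex (fresh_block n r s) us) (separator n r s)) ps)
         \<noteq> zer L (length us)"
proof -
  let ?g = "\<lambda>(n, r, s). sb L n (length us) (reindex (fresh_block n r s) us) (separator n r s)"
  define C where "C = concat (map (\<lambda>(n, r, s). fresh_block n r s) ps)"
  define Ys where "Ys = map (\<lambda>(n, r, s). sb L n (length C) (reindex (fresh_block n r s) C) (separator n r s)) ps"
  have blocks: "set (fresh_block n r s) \<subseteq> set C" if "(n, r, s) \<in> set ps" for n r s
    using that by (force simp: C_def)
  have C: "distinct C" "set C \<subseteq> set us"
  proof -
    show "distinct C" using distinct_concat_fresh_blocks[OF ps] by (simp add: C_def)
    show "set C \<subseteq> set us"
    proof
      fix v assume "v \<in> set C"
      then obtain n r s where "(n, r, s) \<in> set ps" "v \<in> set (fresh_block n r s)" by (auto simp: C_def)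
      then show "v \<in> set us" using sep by blast
    qed
  qed
  have Ys: "sb L n (length C) (reindex (fresh_block n r s) C) (separator n r s) \<in> car L (length C)"
    "sb L (length C) (length us) (reindex C us) (sb L n (length C) (reindex (fresh_block n r s) C) (separator n r s))
     = ?g (n, r, s)"
    if p: "(n, r, s) \<in> set ps" for n r s
  proof -
    have "separator n r s \<in> car L (length (fresh_block n r s))" using p sep separator_closed by auto
    then show "sb L n (length C) (reindex (fresh_block n r s) C) (separator n r s) \<in> car L (length C)"
      "sb L (length C) (length us) (reindex C us) (sb L n (length C) (reindex (fresh_block n r s) C) (separator n r s))
       = ?g (n, r, s)"
      using is_subst_reindex[of "fresh_block n r s" C] blocks[OF p] sb_reindex_comp[OF blocks[OF p] C(2)] by auto
  qed
  have Ys_closed: "set Ys \<subseteq> car L (length C)" using Ys(1) by (auto simp: Ys_def)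
  have "big_mt L (length C) Ys \<noteq> zer L (length C)"
    unfolding Ys_def C_def using meet_of_separators_neq_zer[OF ps] sep by fast
  then have "sb L (length C) (length us) (reindex C us) (big_mt L (length C) Ys) \<noteq> zer L (length us)"
    using sb_reindex_eq_zer_iff[OF C] Ys_closed by simp
  moreover have "map (sb L (length C) (length us) (reindex C us)) Ys = map ?g ps"
    using Ys(2) by (auto simp: Ys_def)
  ultimately show ?thesis using sb_big_mt[OF is_subst_reindex Ys_closed] C by auto
qed

lemma consistent_diagram: "consistent diagram"
  unfolding consistent_def
proof (intro conjI allI impI diagram_subset_formulas)
  fix us xs assume "distinct us" and xs: "set xs \<subseteq> instances us diagram"
  let ?g = "\<lambda>(n, r, s). sb L n (length us) (reindex (fresh_block n r s) us) (separator n r s)"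
  define P where "P = {(n, r, s). r \<in> car L n \<and> s \<in> car L n \<and> r \<noteq> s \<and> set (fresh_block n r s) \<subseteq> set us}"
  have "instances us diagram \<subseteq> ?g ` P"
  proof
    fix x assume "x \<in> instances us diagram"
    then obtain n r s where "x = ?g (n, r, s)" "(n, r, s) \<in> P"
      unfolding instances_def diagram_def P_def by auto
    then show "x \<in> ?g ` P" by blast
  qed
  with xs have "set xs \<subseteq> ?g ` P" by (rule order_trans)
  from finite_subset_image[OF finite_set this]
  obtain F where F: "F \<subseteq> P" "finite F" "set xs = ?g ` F" by (elim exE conjE)
  obtain ps where ps: "set ps = F" "distinct ps" using finite_distinct_list[OF F(2)] by blast
  have "big_mt L (length us) (map ?g ps) \<noteq> zer L (length us)"
    using meet_of_separators_in_context_neq_zer[OF ps(2)] ps(1) F(1) by (auto simp: P_def)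
  moreover have "set (map ?g ps) = set xs" using ps F by simp
  moreover have "set xs \<subseteq> car L (length us)"
    using xs instances_closed[OF diagram_subset_formulas] by blast
  ultimately show "big_mt L (length us) xs \<noteq> zer L (length us)"
    using big_mt_eq_zer_if_subset[of "map ?g ps" "length us" xs] by auto
qed

lemma ex_maximal_consistent:
  "\<exists>T. consistent T \<and> diagram \<subseteq> T \<and> (\<forall>S. consistent S \<longrightarrow> T \<subseteq> S \<longrightarrow> S = T)"
proof -
  let ?A = "{S. consistent S \<and> diagram \<subseteq> S}"
  have "\<exists>T\<in>?A. \<forall>S\<in>?A. T \<subseteq> S \<longrightarrow> S = T"
  proof (rule subset_Zorn_nonempty)
    show "?A \<noteq> {}" using consistent_diagram by auto
  next
    fix \<C> assume ne: "\<C> \<noteq> {}" and chain: "subset.chain ?A \<C>"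
    then have sub: "\<C> \<subseteq> ?A" by (simp add: subset.chain_def)
    have "consistent (\<Union>\<C>)" using consistent_Union_chain[OF _ ne chain] sub by blast
    moreover have "diagram \<subseteq> \<Union>\<C>" using ne sub by blast
    ultimately show "\<Union>\<C> \<in> ?A" by simp
  qed
  then obtain T where T: "consistent T" "diagram \<subseteq> T"
    and max: "\<And>S. consistent S \<Longrightarrow> diagram \<subseteq> S \<Longrightarrow> T \<subseteq> S \<Longrightarrow> S = T"
    by auto
  have "S = T" if "consistent S" "T \<subseteq> S" for S using max that T(2) by blast
  with T show ?thesis by blast
qed

end

locale qf_complete_type = qf_nondeg_model +
  fixes T :: "('a var list \<times> 'a) set"
  assumes consistent_T: "consistent T"
    and diagram_subset_T: "diagram \<subseteq> T"
    and maximal_T: "consistent S \<Longrightarrow> T \<subseteq> S \<Longrightarrow> S = T"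
begin

lemma T_subset_formulas: "T \<subseteq> formulas"
  using consistent_T by (simp add: consistent_def)

lemma big_mt_instances_neq_zer:
  "distinct us \<Longrightarrow> set xs \<subseteq> instances us T \<Longrightarrow> big_mt L (length us) xs \<noteq> zer L (length us)"
  using consistent_T by (simp add: consistent_def)

lemma inconsistent_insert:
  assumes vs: "distinct vs" "r \<in> car L (length vs)" and inc: "\<not> consistent (insert (vs, r) T)"
  obtains ws where "set vs \<subseteq> set ws"
    "\<And>us. distinct us \<Longrightarrow> set ws \<subseteq> set us \<Longrightarrow> \<exists>xs. set xs \<subseteq> instances us T \<and>
       mt L (length us) (sb L (length vs) (length us) (reindex vs us) r) (big_mt L (length us) xs) = zer L (length us)"
proof -
  have S: "insert (vs, r) T \<subseteq> formulas" using vs T_subset_formulas by (auto simp: formulas_def)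
  then obtain ws xs where ws: "distinct ws" "set xs \<subseteq> instances ws (insert (vs, r) T)"
    "big_mt L (length ws) xs = zer L (length ws)"
    using inc unfolding consistent_def by blast
  show thesis
  proof (rule that[of "vs @ ws"])
    fix us assume us: "distinct us" "set (vs @ ws) \<subseteq> set us"
    let ?R = "sb L (length vs) (length us) (reindex vs us) r"
    define ys where "ys = map (sb L (length ws) (length us) (reindex ws us)) xs"
    define zs where "zs = filter (\<lambda>x. x \<in> instances us T) ys"
    have ws_us: "set ws \<subseteq> set us" using us by auto
    have "set ys \<subseteq> insert ?R (instances us T)"
      using instances_transport[OF S ws_us ws(2)] instances_insert[of vs us] us by (simp add: ys_def)
    then have "set ys \<subseteq> set (?R # zs)" by (auto simp: zs_def)
    moreover have "set (?R # zs) \<subseteq> car L (length us)"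
      using instances_closed[OF T_subset_formulas, of us] is_subst_reindex[of vs us] us vs
      by (auto simp: zs_def)
    moreover have "big_mt L (length us) ys = zer L (length us)"
    proof -
      have \<beta>: "is_subst (length ws) (length us) (reindex ws us)" using is_subst_reindex ws_us by blast
      have "set xs \<subseteq> car L (length ws)" using ws(2) instances_closed[OF S] by blast
      from sb_big_mt[OF \<beta> this, symmetric] show ?thesis using ws(3) sb_zer[OF \<beta>] by (simp add: ys_def)
    qed
    ultimately have "big_mt L (length us) (?R # zs) = zer L (length us)"
      using big_mt_eq_zer_if_subset by blast
    then show "\<exists>xs. set xs \<subseteq> instances us T \<and> mt L (length us) ?R (big_mt L (length us) xs) = zer L (length us)"
      by (intro exI[of _ zs]) (auto simp: zs_def)
  qed auto
qed

lemma mem_or_ng_mem_T: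
  assumes vs: "distinct vs" "r \<in> car L (length vs)"
  shows "(vs, r) \<in> T \<or> (vs, ng L (length vs) r) \<in> T"
proof (rule ccontr)
  let ?n = "length vs"
  assume "\<not> ?thesis"
  then have "\<not> consistent (insert (vs, r) T)" "\<not> consistent (insert (vs, ng L ?n r) T)"
    using maximal_T by blast+
  with vs obtain ws1 ws2 where ws: "set vs \<subseteq> set ws1" "set vs \<subseteq> set ws2"
    and wit1: "\<And>us. distinct us \<Longrightarrow> set ws1 \<subseteq> set us \<Longrightarrow> \<exists>xs. set xs \<subseteq> instances us T \<and>
       mt L (length us) (sb L ?n (length us) (reindex vs us) r) (big_mt L (length us) xs) = zer L (length us)"
    and wit2: "\<And>us. distinct us \<Longrightarrow> set ws2 \<subseteq> set us \<Longrightarrow> \<exists>xs. set xs \<subseteq> instances us T \<and>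
       mt L (length us) (sb L ?n (length us) (reindex vs us) (ng L ?n r)) (big_mt L (length us) xs) = zer L (length us)"
    by (metis inconsistent_insert ng_closed)
  define us where "us = remdups (ws1 @ ws2)"
  let ?N = "length us"
  let ?R = "sb L ?n ?N (reindex vs us) r"
  have us: "distinct us" "set ws1 \<subseteq> set us" "set ws2 \<subseteq> set us" by (auto simp: us_def)
  have \<alpha>: "is_subst ?n ?N (reindex vs us)" using is_subst_reindex ws(1) us(2) by blast
  obtain xs1 where xs1: "set xs1 \<subseteq> instances us T" "mt L ?N ?R (big_mt L ?N xs1) = zer L ?N"
    using wit1[OF us(1,2)] by blast
  obtain xs2 where xs2: "set xs2 \<subseteq> instances us T" "mt L ?N (ng L ?N ?R) (big_mt L ?N xs2) = zer L ?N"
    using wit2[OF us(1,3)] sb_ng[OF \<alpha> vs(2)] by auto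
  have car: "set (xs1 @ xs2) \<subseteq> car L ?N" "?R \<in> car L ?N"
    using xs1 xs2 instances_closed[OF T_subset_formulas, of us] \<alpha> vs by auto
  have "big_mt L ?N (?R # xs1 @ xs2) = zer L ?N" "big_mt L ?N (ng L ?N ?R # xs1 @ xs2) = zer L ?N"
    using big_mt_eq_zer_if_subset[of "?R # xs1 @ xs2" ?N "?R # xs1"]
      big_mt_eq_zer_if_subset[of "ng L ?N ?R # xs1 @ xs2" ?N "ng L ?N ?R # xs2"] xs1 xs2 car by auto
  then have "big_mt L ?N (xs1 @ xs2) = zer L ?N"
    using eq_zer_if_mt_and_mt_ng_eq_zer[of "big_mt L ?N (xs1 @ xs2)" ?N ?R] car by simp
  then show False using big_mt_instances_neq_zer[OF us(1)] xs1 xs2 by simp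
qed

lemma big_mt_mem_T_neq_zer:
  "distinct vs \<Longrightarrow> set rs \<subseteq> car L (length vs) \<Longrightarrow> \<forall>r\<in>set rs. (vs, r) \<in> T \<Longrightarrow>
   big_mt L (length vs) rs \<noteq> zer L (length vs)"
  using big_mt_instances_neq_zer[of vs rs] mem_instances_self[OF _ T_subset_formulas] by blast

lemma ng_mem_T_iff:
  assumes "distinct vs" "r \<in> car L (length vs)"
  shows "(vs, ng L (length vs) r) \<in> T \<longleftrightarrow> (vs, r) \<notin> T"
  using big_mt_mem_T_neq_zer[of vs "[r, ng L (length vs) r]"] mem_or_ng_mem_T assms
  by (auto simp: mt_one mt_ng)

lemma zer_notin_T: "distinct vs \<Longrightarrow> (vs, zer L (length vs)) \<notin> T"
  using big_mt_mem_T_neq_zer[of vs "[zer L (length vs)]"] by (auto simp: mt_one)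

lemma one_mem_T: "distinct vs \<Longrightarrow> (vs, one L (length vs)) \<in> T"
  using ng_mem_T_iff[of vs "one L (length vs)"] zer_notin_T[of vs] ng_one[of "length vs"] by simp

text \<open>Each of the following truth conditions holds because otherwise T would contain, in the
  context vs, formulas with zero meet.\<close>
lemma mt_mem_T_iff:
  assumes vs: "distinct vs" and rs: "r \<in> car L (length vs)" "s \<in> car L (length vs)"
  shows "(vs, mt L (length vs) r s) \<in> T \<longleftrightarrow> (vs, r) \<in> T \<and> (vs, s) \<in> T"
proof -
  let ?n = "length vs"
  have "\<not> ((vs, mt L ?n r s) \<in> T \<and> (vs, ng L ?n r) \<in> T)"
    using big_mt_mem_T_neq_zer[OF vs, of "[mt L ?n r s, ng L ?n r]"] rs by (auto simp: mt_one mt_mt_ng_left)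
  moreover have "\<not> ((vs, mt L ?n r s) \<in> T \<and> (vs, ng L ?n s) \<in> T)"
    using big_mt_mem_T_neq_zer[OF vs, of "[mt L ?n s r, ng L ?n s]"] rs mt_comm[of r ?n s]
    by (auto simp: mt_one mt_mt_ng_left)
  moreover have "\<not> ((vs, r) \<in> T \<and> (vs, s) \<in> T \<and> (vs, ng L ?n (mt L ?n r s)) \<in> T)"
    using big_mt_mem_T_neq_zer[OF vs, of "[r, s, ng L ?n (mt L ?n r s)]"] rs by (auto simp: mt_one mt_mt_ng_mt)
  ultimately show ?thesis using ng_mem_T_iff[OF vs] rs by auto
qed

lemma jn_mem_T_iff:
  assumes vs: "distinct vs" and rs: "r \<in> car L (length vs)" "s \<in> car L (length vs)"
  shows "(vs, jn L (length vs) r s) \<in> T \<longleftrightarrow> (vs, r) \<in> T \<or> (vs, s) \<in> T"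
proof -
  let ?n = "length vs"
  have "\<not> ((vs, r) \<in> T \<and> (vs, ng L ?n (jn L ?n r s)) \<in> T)"
    using big_mt_mem_T_neq_zer[OF vs, of "[r, ng L ?n (jn L ?n r s)]"] rs by (auto simp: mt_one mt_ng_jn)
  moreover have "\<not> ((vs, s) \<in> T \<and> (vs, ng L ?n (jn L ?n r s)) \<in> T)"
    using big_mt_mem_T_neq_zer[OF vs, of "[s, ng L ?n (jn L ?n s r)]"] rs jn_comm[of r ?n s]
    by (auto simp: mt_one mt_ng_jn)
  moreover have "\<not> ((vs, jn L ?n r s) \<in> T \<and> (vs, ng L ?n r) \<in> T \<and> (vs, ng L ?n s) \<in> T)"
    using big_mt_mem_T_neq_zer[OF vs, of "[jn L ?n r s, ng L ?n r, ng L ?n s]"] rs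
    by (auto simp: mt_one mt_jn_ng_ng)
  ultimately show ?thesis using ng_mem_T_iff[OF vs] rs by auto
qed

lemma mem_T_reindex_iff:
  assumes vs: "distinct vs" "distinct us" "set vs \<subseteq> set us" and r: "r \<in> car L (length vs)"
  shows "(us, sb L (length vs) (length us) (reindex vs us) r) \<in> T \<longleftrightarrow> (vs, r) \<in> T"
proof -
  let ?R = "sb L (length vs) (length us) (reindex vs us) r"
  have \<alpha>: "is_subst (length vs) (length us) (reindex vs us)" using is_subst_reindex vs by blast
  have R: "?R \<in> car L (length us)" using \<alpha> r by simp
  have "?R \<in> instances us T" if "(vs, r) \<in> T" using that vs(3) by (force simp: instances_def)
  moreover have "ng L (length us) ?R \<in> instances us T" if "(vs, ng L (length vs) r) \<in> T"
    using that vs(3) sb_ng[OF \<alpha> r] by (force simp: instances_def)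
  moreover have "x \<in> instances us T" if "(us, x) \<in> T" for x
    using that mem_instances_self[OF _ T_subset_formulas] by blast
  ultimately have "\<not> ((vs, r) \<in> T \<and> (us, ng L (length us) ?R) \<in> T)"
    "\<not> ((vs, ng L (length vs) r) \<in> T \<and> (us, ?R) \<in> T)"
    using big_mt_instances_neq_zer[OF vs(2), of "[?R, ng L (length us) ?R]"]
      big_mt_instances_neq_zer[OF vs(2), of "[ng L (length us) ?R, ?R]"] R
    by (auto simp: mt_one mt_ng mt_comm[of "ng L (length us) ?R" "length us" ?R])
  then show ?thesis using ng_mem_T_iff[OF vs(1) r] ng_mem_T_iff[OF vs(2) R] by blast
qed

text \<open>A tuple ws, possibly with repetitions, satisfies r when T contains r rewritten in the
  distinct variables of ws.\<close>
definition canonical_hom :: "nat \<Rightarrow> 'a \<Rightarrow> 'a var list set" where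
  "canonical_hom n r = {ws. length ws = n \<and>
     (remdups ws, sb L n (length (remdups ws)) (reindex ws (remdups ws)) r) \<in> T}"

lemma is_subst_reindex_remdups: "is_subst (length ws) (length (remdups ws)) (reindex ws (remdups ws))"
  using is_subst_reindex[of ws "remdups ws"] by simp

lemma mem_canonical_hom_iff:
  "ws \<in> canonical_hom n r \<longleftrightarrow>
   length ws = n \<and> (remdups ws, sb L n (length (remdups ws)) (reindex ws (remdups ws)) r) \<in> T"
  by (simp add: canonical_hom_def)

lemma canonical_hom_zer: "canonical_hom n (zer L n) = {}"
  by (auto simp: mem_canonical_hom_iff sb_zer[OF is_subst_reindex_remdups] zer_notin_T)

lemma canonical_hom_one: "canonical_hom n (one L n) = {ws. length ws = n}"
  by (auto simp: mem_canonical_hom_iff sb_one[OF is_subst_reindex_remdups] one_mem_T)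

lemma canonical_hom_mt:
  "x \<in> car L n \<Longrightarrow> y \<in> car L n \<Longrightarrow> canonical_hom n (mt L n x y) = canonical_hom n x \<inter> canonical_hom n y"
  by (auto simp: mem_canonical_hom_iff sb_mt[OF is_subst_reindex_remdups] mt_mem_T_iff is_subst_reindex_remdups)

lemma canonical_hom_jn:
  "x \<in> car L n \<Longrightarrow> y \<in> car L n \<Longrightarrow> canonical_hom n (jn L n x y) = canonical_hom n x \<union> canonical_hom n y"
  by (auto simp: mem_canonical_hom_iff sb_jn[OF is_subst_reindex_remdups] jn_mem_T_iff is_subst_reindex_remdups)

lemma canonical_hom_ng:
  "x \<in> car L n \<Longrightarrow> canonical_hom n (ng L n x) = {ws. length ws = n} - canonical_hom n x"
  by (auto simp: mem_canonical_hom_iff sb_ng[OF is_subst_reindex_remdups] ng_mem_T_iff is_subst_reindex_remdups)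

lemma canonical_hom_sb:
  assumes \<alpha>: "is_subst n k \<alpha>" and x: "x \<in> car L n"
  shows "canonical_hom k (sb L n k \<alpha> x) = subst_rel UNIV n k \<alpha> (canonical_hom n x)"
proof (rule set_eqI)
  fix ws
  show "ws \<in> canonical_hom k (sb L n k \<alpha> x) \<longleftrightarrow> ws \<in> subst_rel UNIV n k \<alpha> (canonical_hom n x)"
  proof (cases "length ws = k")
    case True
    define V where "V = remdups ws"
    define u where "u = subst_tuple n \<alpha> ws"
    define U where "U = remdups u"
    have UV: "set U \<subseteq> set V" using set_subst_tuple_subset[OF \<alpha> True] by (simp add: U_def V_def u_def)
    have xu: "x \<in> car L (length u)" using x by (simp add: u_def)
    have "ws \<in> canonical_hom k (sb L n k \<alpha> x) \<longleftrightarrow> (V, sb L n (length V) (reindex ws V \<circ> \<alpha>) x) \<in> T"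
      using True sb_comp[OF \<alpha> is_subst_reindex_remdups[of ws, unfolded True] x]
      by (simp add: mem_canonical_hom_iff V_def)
    also have "reindex ws V \<circ> \<alpha> = reindex u V" using reindex_subst_tuple[OF \<alpha> True] by (simp add: u_def V_def)
    also have "sb L n (length V) (reindex u V) x =
        sb L (length U) (length V) (reindex U V) (sb L (length u) (length U) (reindex u U) x)"
      using sb_reindex_comp[of u U V x] UV xu by (simp add: U_def u_def)
    also have "(V, \<dots>) \<in> T \<longleftrightarrow> (U, sb L (length u) (length U) (reindex u U) x) \<in> T"
      using mem_T_reindex_iff[of U V] UV is_subst_reindex[of u U] xu by (simp add: U_def V_def)
    also have "\<dots> \<longleftrightarrow> ws \<in> subst_rel UNIV n k \<alpha> (canonical_hom n x)"
      using True by (simp add: mem_canonical_hom_iff subst_rel_def tuples_def U_def u_def)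
    finally show ?thesis .
  qed (simp add: mem_canonical_hom_iff subst_rel_def tuples_def)
qed

text \<open>The diagram separates distinct elements: on the block reserved for \<open>(x, y)\<close> the
  type T contains \<open>separator n x y\<close>, which lies below exactly one of x and y.\<close>
lemma inj_on_canonical_hom: "inj_on (canonical_hom n) (car L n)"
proof (rule inj_onI, rule ccontr)
  fix x y assume xy: "x \<in> car L n" "y \<in> car L n" "canonical_hom n x = canonical_hom n y" "x \<noteq> y"
  define ws where "ws = fresh_block n x y"
  have ws: "distinct ws" "length ws = n"
    by (simp_all add: ws_def fresh_block_def distinct_map inj_on_def)
  have mem: "ws \<in> canonical_hom n z \<longleftrightarrow> (ws, z) \<in> T" if "z \<in> car L n" for z
    using reindex_self[OF ws(1)] sb_id[of z n] that ws by (simp add: mem_canonical_hom_iff distinct_remdups_id)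
  have "(ws, separator n x y) \<in> T" using diagram_subset_T xy by (auto simp: diagram_def ws_def)
  then have "(ws, x) \<in> T \<and> (ws, y) \<notin> T \<or> (ws, y) \<in> T \<and> (ws, x) \<notin> T"
    using mt_mem_T_iff[OF ws(1)] ng_mem_T_iff[OF ws(1)] xy ws(2)
    by (auto simp: separator_def split: if_splits)
  then show False using mem xy by blast
qed

lemma qf_embedding_canonical_hom: "qf_embedding L UNIV canonical_hom"
  unfolding qf_embedding_def Let_def qf_algebra_of_def
  by (auto simp: tuples_def inj_on_canonical_hom canonical_hom_zer canonical_hom_one canonical_hom_mt
      canonical_hom_jn canonical_hom_ng canonical_hom_sb mem_canonical_hom_iff)

end

lemma (in qf_nondeg_model) embeds_in_qf_UNIV: "embeds_in_qf L (UNIV :: 'a var set)"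
proof -
  obtain T where "consistent T" "diagram \<subseteq> T" "\<And>S. consistent S \<Longrightarrow> T \<subseteq> S \<Longrightarrow> S = T"
    using ex_maximal_consistent by blast
  then interpret qf_complete_type L T by unfold_locales
  show ?thesis unfolding embeds_in_qf_def using qf_embedding_canonical_hom by blast
qed

section \<open>Subalgebras of \<open>A(W)\<close> satisfy the axioms\<close>

locale qf_embedded = qf_alg_closed +
  fixes W :: "'w set" and h :: "nat \<Rightarrow> 'a \<Rightarrow> 'w list set"
  assumes embedding: "qf_embedding L W h"
begin

lemma h_inj: "x \<in> car L n \<Longrightarrow> y \<in> car L n \<Longrightarrow> h n x = h n y \<Longrightarrow> x = y"
  using embedding unfolding qf_embedding_def Let_def by (meson inj_onD)

lemma h_subset_tuples: "x \<in> car L n \<Longrightarrow> h n x \<subseteq> tuples W n"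
  using embedding unfolding qf_embedding_def Let_def qf_algebra_of_def by auto

lemma h_zer [simp]: "h n (zer L n) = {}"
  using embedding unfolding qf_embedding_def Let_def qf_algebra_of_def by auto

lemma h_one [simp]: "h n (one L n) = tuples W n"
  using embedding unfolding qf_embedding_def Let_def qf_algebra_of_def by auto

lemma h_jn [simp]: "x \<in> car L n \<Longrightarrow> y \<in> car L n \<Longrightarrow> h n (jn L n x y) = h n x \<union> h n y"
  using embedding unfolding qf_embedding_def Let_def qf_algebra_of_def by auto

lemma h_mt [simp]: "x \<in> car L n \<Longrightarrow> y \<in> car L n \<Longrightarrow> h n (mt L n x y) = h n x \<inter> h n y"
  using embedding unfolding qf_embedding_def Let_def qf_algebra_of_def by auto

lemma h_ng [simp]: "x \<in> car L n \<Longrightarrow> h n (ng L n x) = tuples W n - h n x"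
  using embedding unfolding qf_embedding_def Let_def qf_algebra_of_def by auto

lemma h_sb [simp]: "is_subst n k \<alpha> \<Longrightarrow> x \<in> car L n \<Longrightarrow> h k (sb L n k \<alpha> x) = subst_rel W n k \<alpha> (h n x)"
  using embedding unfolding qf_embedding_def Let_def qf_algebra_of_def by auto

lemma h_big_mt: "set xs \<subseteq> car L n \<Longrightarrow> h n (big_mt L n xs) = tuples W n \<inter> (\<Inter>x\<in>set xs. h n x)"
  by (induction xs) (use h_subset_tuples in auto)

lemma h_big_jn: "set xs \<subseteq> car L n \<Longrightarrow> h n (big_jn L n xs) = (\<Union>x\<in>set xs. h n x)"
  by (induction xs) auto

lemma le_in_iff_subset:
  assumes xy: "x \<in> car L n" "y \<in> car L n"
  shows "le_in L n x y \<longleftrightarrow> h n x \<subseteq> h n y"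
  unfolding le_in_def
proof
  assume "x = mt L n x y"
  then have "h n x = h n x \<inter> h n y" using xy by (metis h_mt)
  then show "h n x \<subseteq> h n y" by blast
next
  assume "h n x \<subseteq> h n y"
  then have "h n x = h n (mt L n x y)" using xy by auto
  then show "x = mt L n x y" using h_inj xy by simp
qed

lemma satisfies_ax1: "ax1 L"
  unfolding ax1_def
proof (intro allI ballI conjI)
  fix n x y z assume xyz: "x \<in> car L n" "y \<in> car L n" "z \<in> car L n"
  note hx = h_subset_tuples[OF xyz(1)]
  show "jn L n (jn L n x y) z = jn L n x (jn L n y z)" by (rule h_inj[where n = n]) (auto simp: xyz)
  show "mt L n (mt L n x y) z = mt L n x (mt L n y z)" by (rule h_inj[where n = n]) (auto simp: xyz)
  show "jn L n x y = jn L n y x" by (rule h_inj[where n = n]) (auto simp: xyz)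
  show "mt L n x y = mt L n y x" by (rule h_inj[where n = n]) (auto simp: xyz)
  show "jn L n x (mt L n x y) = x" by (rule h_inj[where n = n]) (auto simp: xyz)
  show "mt L n x (jn L n x y) = x" by (rule h_inj[where n = n]) (auto simp: xyz)
  show "jn L n x (zer L n) = x" by (rule h_inj[where n = n]) (auto simp: xyz)
  show "mt L n x (one L n) = x" by (rule h_inj[where n = n]) (use hx in \<open>auto simp: xyz\<close>)
  show "mt L n x (jn L n y z) = jn L n (mt L n x y) (mt L n x z)" by (rule h_inj[where n = n]) (auto simp: xyz)
qed

lemma satisfies_ax2: "ax2 L"
  unfolding ax2_def
proof (intro allI impI ballI conjI)
  fix n k \<alpha> assume \<alpha>: "is_subst n k \<alpha>"
  show "sb L n k \<alpha> (zer L n) = zer L k" by (rule h_inj[where n = k]) (use \<alpha> in \<open>auto simp: subst_rel_def\<close>)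
  show "sb L n k \<alpha> (one L n) = one L k" by (rule h_inj[where n = k]) (use \<alpha> in \<open>auto simp: subst_rel_tuples\<close>)
  fix x y assume xy: "x \<in> car L n" "y \<in> car L n"
  show "sb L n k \<alpha> (jn L n x y) = jn L k (sb L n k \<alpha> x) (sb L n k \<alpha> y)"
    by (rule h_inj[where n = k]) (use \<alpha> xy in \<open>auto simp: subst_rel_def\<close>)
  show "sb L n k \<alpha> (mt L n x y) = mt L k (sb L n k \<alpha> x) (sb L n k \<alpha> y)"
    by (rule h_inj[where n = k]) (use \<alpha> xy in \<open>auto simp: subst_rel_def\<close>)
qed

lemma satisfies_ax3: "ax3 L"
  unfolding ax3_def
proof (intro allI impI ballI)
  fix k n m \<alpha> \<beta> r assume \<alpha>\<beta>: "is_subst k n \<alpha>" "is_subst n m \<beta>" and r: "r \<in> car L k"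
  show "sb L k m (\<beta> \<circ> \<alpha>) r = sb L n m \<beta> (sb L k n \<alpha> r)"
    by (rule h_inj[where n = m]) (use \<alpha>\<beta> r is_subst_comp[OF \<alpha>\<beta>] subst_rel_comp[OF \<alpha>\<beta>] in auto)
qed

lemma satisfies_ax4: "ax4 L"
  unfolding ax4_def
proof (intro allI ballI)
  fix n r assume r: "r \<in> car L n"
  show "sb L n n (id_subst n) r = r"
    by (rule h_inj[where n = n]) (use r is_subst_id subst_rel_id[OF h_subset_tuples[OF r]] in auto)
qed

lemma satisfies_ax5: "ax5 L"
  unfolding ax5_def
proof (intro allI impI ballI)
  fix n k \<alpha> r assume \<alpha>: "is_subst n k \<alpha>" and r: "r \<in> car L n"
  show "sb L n k \<alpha> (ng L n r) = ng L k (sb L n k \<alpha> r)"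
    by (rule h_inj[where n = k]) (use \<alpha> r subst_rel_compl[OF \<alpha>] in auto)
qed

lemma satisfies_ax6: "ax6 L"
  unfolding ax6_def
proof (intro allI ballI conjI)
  fix n r assume r: "r \<in> car L n"
  show "jn L n r (ng L n r) = one L n" by (rule h_inj[where n = n]) (use h_subset_tuples[OF r] r in auto)
  show "mt L n r (ng L n r) = zer L n" by (rule h_inj[where n = n]) (use r in auto)
qed

lemma satisfies_ax0: "ax0 L"
  unfolding ax0_def
proof (intro allI impI)
  fix ks :: "nat list" and rs ss
  assume "length rs = length ks" "length ss = length ks"
    and mem: "\<forall>i<length ks. rs ! i \<in> car L (ks ! i) \<and> ss ! i \<in> car L (ks ! i)"
  let ?N = "sum_list ks"
  let ?cyls = "\<lambda>xs. map (\<lambda>i. sb L (ks ! i) ?N (cyl ks i) (xs ! i)) [0..<length ks]"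
  have cyls: "set (?cyls rs) \<subseteq> car L ?N" "set (?cyls ss) \<subseteq> car L ?N"
    using mem is_subst_cyl by auto
  assume "le_in L ?N (big_mt L ?N (?cyls rs)) (big_jn L ?N (?cyls ss))"
  then have le: "h ?N (big_mt L ?N (?cyls rs)) \<subseteq> h ?N (big_jn L ?N (?cyls ss))"
    using le_in_iff_subset cyls by simp
  show "\<exists>i<length ks. le_in L (ks ! i) (rs ! i) (ss ! i)"
  proof (rule ccontr)
    assume "\<not> ?thesis"
    then have "\<forall>i<length ks. \<exists>t. t \<in> h (ks ! i) (rs ! i) - h (ks ! i) (ss ! i)"
      using le_in_iff_subset mem by blast
    then obtain f where f: "\<And>i. i < length ks \<Longrightarrow> f i \<in> h (ks ! i) (rs ! i) - h (ks ! i) (ss ! i)"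
      by metis
    then have ft: "f i \<in> tuples W (ks ! i)" if "i < length ks" for i
      using that h_subset_tuples mem by blast
    define t where "t = concat (map f [0..<length ks])"
    have t: "t \<in> tuples W ?N" "\<And>i. i < length ks \<Longrightarrow> subst_tuple (ks ! i) (cyl ks i) t = f i"
      using concat_tuples_cyl[of ks f W] ft by (simp_all add: t_def)
    have "t \<in> h ?N (sb L (ks ! i) ?N (cyl ks i) (rs ! i))"
      "t \<notin> h ?N (sb L (ks ! i) ?N (cyl ks i) (ss ! i))" if i: "i < length ks" for i
      using t(1) t(2)[OF i] f[OF i] mem i is_subst_cyl[OF i] by (simp_all add: subst_rel_def)
    then have "t \<in> h ?N (big_mt L ?N (?cyls rs))" "t \<notin> h ?N (big_jn L ?N (?cyls ss))"
      using t(1) by (auto simp: h_big_mt[OF cyls(1)] h_big_jn[OF cyls(2)])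
    then show False using le by blast
  qed
qed

lemma satisfies_qf_axioms: "qf_axioms L"
  unfolding qf_axioms_def using satisfies_ax0 satisfies_ax1 satisfies_ax2 satisfies_ax3
    satisfies_ax4 satisfies_ax5 satisfies_ax6 by blast

end

theorem theorem4p1:
  fixes L :: "'a qf_alg"
  assumes "qf_multisorted_algebra L"
  shows "(qf_axioms L \<longrightarrow> (\<exists>W :: (nat \<times> 'a \<times> 'a \<times> nat) set. embeds_in_qf L W))
       \<and> (\<forall>W :: 'w set. embeds_in_qf L W \<longrightarrow> qf_axioms L)"
proof (intro conjI impI allI)
  assume "qf_axioms L"
  then interpret qf_model L using assms by unfold_locales
  show "\<exists>W :: (nat \<times> 'a \<times> 'a \<times> nat) set. embeds_in_qf L W"
  proof (cases "one L 1 = zer L 1")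
    case True
    then interpret qf_degenerate_model L by unfold_locales
    show ?thesis using qf_embedding_truth_hom unfolding embeds_in_qf_def by blast
  next
    case False
    then interpret qf_nondeg_model L by unfold_locales
    show ?thesis using embeds_in_qf_UNIV by blast
  qed
next
  fix W :: "'w set"
  assume "embeds_in_qf L W"
  then obtain h where "qf_embedding L W h" unfolding embeds_in_qf_def by blast
  then interpret qf_embedded L W h using assms by unfold_locales
  show "qf_axioms L" by (rule satisfies_qf_axioms)
qed

end
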